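(* The formal Burau group $\mathcal{B}$ equals Salter's group $\Gamma$; that is, every $A\in\mathcal{B}$ satisfies that $A|_{t=1}$ is a $3\times3$ permutation matrix.
   Context: For a matrix $A$ with Laurent polynomial entries, $\overline{A}$ denotes substitution $t\mapsto t^{-1}$ in every entry. Let $J_3=\begin{pmatrix}1&-t^{-1}&-t^{-1}\\-t&1&-t^{-1}\\-t&-t&1\end{pmatrix}$, $v=(t,t^2,t^3)$ (a row vector), $\vec{1}=(1,1,1)^T$. The formal Burau group is $\mathcal{B}=\{A\in\mathrm{GL}(3,\mathbb{Z}[t,t^{-1}]) : vA=v,\ A\vec 1=\vec 1,\ \overline{A}J_3A^T=J_3\}$, and Salter's group is $\Gamma=\{A\in\mathcal{B}: A|_{t=1}\text{ is a }3\times 3\text{ permutation matrix}\}$. *)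

theory Defs
  imports "HOL-Analysis.Analysis" "HOL-Computational_Algebra.Formal_Laurent_Series"
begin

text \<open>Laurent polynomials Z[t,t^-1] are represented as integer formal Laurent series
  (type int fls) with finitely many nonzero coefficients; t is fls_X.\<close>

definition lsupp :: "int fls \<Rightarrow> int set" where
  "lsupp f = {n. fls_nth f n \<noteq> 0}"

definition is_lpoly :: "int fls \<Rightarrow> bool" where
  "is_lpoly f \<longleftrightarrow> finite (lsupp f)"

definition lbar :: "int fls \<Rightarrow> int fls" where
  "lbar f = (\<Sum>n\<in>lsupp f. fls_const (fls_nth f n) * fls_X_intpow (-n))"

definition leval1 :: "int fls \<Rightarrow> int" where
  "leval1 f = (\<Sum>n\<in>lsupp f. fls_nth f n)"

type_synonym lmat = "int fls ^ 3 ^ 3"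

definition lpoly_mat :: "lmat \<Rightarrow> bool" where
  "lpoly_mat A \<longleftrightarrow> (\<forall>i j. is_lpoly (A $ i $ j))"

definition GL3_lpoly :: "lmat set" where
  "GL3_lpoly = {A. lpoly_mat A \<and> (\<exists>B. lpoly_mat B \<and> A ** B = mat 1 \<and> B ** A = mat 1)}"

definition mbar :: "lmat \<Rightarrow> lmat" where
  "mbar A = (\<chi> i j. lbar (A $ i $ j))"

definition meval1 :: "lmat \<Rightarrow> int ^ 3 ^ 3" where
  "meval1 A = (\<chi> i j. leval1 (A $ i $ j))"

text \<open>Indices of the numeral type 3 are written 1, 2, 3.\<close>
definition J3 :: lmat where
  "J3 = (\<chi> i j. if i = j then 1
               else if (i, j) \<in> {(1,2),(1,3),(2,3)} then - fls_X_inv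
               else - fls_X)"

definition vt :: "int fls ^ 3" where
  "vt = (\<chi> i. if i = 1 then fls_X else if i = 2 then fls_X ^ 2 else fls_X ^ 3)"

definition ones3 :: "int fls ^ 3" where
  "ones3 = (\<chi> i. 1)"

definition formal_Burau :: "lmat set" where
  "formal_Burau = {A \<in> GL3_lpoly. vt v* A = vt \<and> A *v ones3 = ones3
                     \<and> mbar A ** J3 ** transpose A = J3}"

definition is_perm_matrix :: "int ^ 3 ^ 3 \<Rightarrow> bool" where
  "is_perm_matrix P \<longleftrightarrow> (\<exists>\<sigma>. \<sigma> permutes (UNIV :: 3 set) \<and>
                          P = (\<chi> i j. if \<sigma> i = j then 1 else 0))"

definition Salter_Gamma :: "lmat set" where
  "Salter_Gamma = {A \<in> formal_Burau. is_perm_matrix (meval1 A)}"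

end

theory Submission
  imports Defs "HOL-Combinatorics.Permutations"
begin

text \<open>Evaluation at \<open>t = 1\<close> is a ring homomorphism \<open>\<int>[t,t\<^sup>-\<^sup>1] \<rightarrow> \<int>\<close> that is invariant
  under \<open>t \<mapsto> t\<^sup>-\<^sup>1\<close>. It maps \<open>J\<^sub>3\<close> to \<open>2I - E\<close>, where \<open>E\<close> is the all-ones matrix, and turns
  \<open>A\<one> = \<one>\<close> into \<open>P\<one> = \<one>\<close> for \<open>P = A|\<^sub>t\<^sub>=\<^sub>1\<close>. Then \<open>PEP\<^sup>T = E\<close>, so the unitarity relation
  becomes \<open>PP\<^sup>T = I\<close>. An integer vector whose entries and whose squared entries both sum
  to 1 is a standard basis vector, because \<open>x\<^sup>2 - x \<ge> 0\<close> on \<open>\<int>\<close>; hence the rows of \<open>P\<close> are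
  pairwise orthogonal standard basis vectors, i.e. \<open>P\<close> is a permutation matrix.\<close>

no_notation fps_nth (infixl \<open>$\<close> 75)

definition lmonom :: "int \<Rightarrow> int \<Rightarrow> int fls" where
  "lmonom c k = fls_const c * fls_X_intpow k"

lemma fls_nth_lmonom: "fls_nth (lmonom c k) n = (if n = k then c else 0)"
  by (simp add: lmonom_def)

lemma lsupp_lmonom: "lsupp (lmonom c k) \<subseteq> {k}"
  by (auto simp: lsupp_def fls_nth_lmonom)

lemma lmonom_mult: "lmonom a i * lmonom b j = lmonom (a * b) (i + j)"
proof -
  have "lmonom a i * lmonom b j = (fls_const a * fls_const b) * (fls_X_intpow i * fls_X_intpow j)"
    unfolding lmonom_def by (simp only: mult_ac)
  also have "\<dots> = lmonom (a * b) (i + j)"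
    unfolding lmonom_def by (simp only: fls_const_mult_const fls_X_intpow_times_fls_X_intpow)
  finally show ?thesis .
qed

lemma lpoly_eq_sum_lmonom: "is_lpoly f \<Longrightarrow> f = (\<Sum>n\<in>lsupp f. lmonom (fls_nth f n) n)"
  by (rule fls_eqI) (auto simp: fls_nth_sum fls_nth_lmonom lsupp_def is_lpoly_def)

lemma lbar_eq_sum_lmonom: "lbar f = (\<Sum>n\<in>lsupp f. lmonom (fls_nth f n) (- n))"
  by (simp add: lbar_def lmonom_def)

lemma leval1_eq_sum_superset: "finite S \<Longrightarrow> lsupp f \<subseteq> S \<Longrightarrow> leval1 f = (\<Sum>n\<in>S. fls_nth f n)"
  unfolding leval1_def by (rule sum.mono_neutral_left) (auto simp: lsupp_def)

lemma is_lpoly_0: "is_lpoly 0"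
  by (simp add: is_lpoly_def lsupp_def)

lemma leval1_0: "leval1 0 = 0"
  by (simp add: leval1_def lsupp_def)

lemma is_lpoly_add: "is_lpoly f \<Longrightarrow> is_lpoly g \<Longrightarrow> is_lpoly (f + g)"
  unfolding is_lpoly_def
  by (rule finite_subset[of _ "lsupp f \<union> lsupp g"]) (auto simp: lsupp_def)

lemma leval1_add:
  assumes "is_lpoly f" "is_lpoly g"
  shows "leval1 (f + g) = leval1 f + leval1 g"
proof -
  let ?S = "lsupp f \<union> lsupp g"
  have S: "finite ?S"
    using assms by (simp add: is_lpoly_def)
  have "leval1 (f + g) = (\<Sum>n\<in>?S. fls_nth (f + g) n)"
    by (rule leval1_eq_sum_superset[OF S]) (auto simp: lsupp_def)
  also have "\<dots> = (\<Sum>n\<in>?S. fls_nth f n) + (\<Sum>n\<in>?S. fls_nth g n)"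
    by (simp add: sum.distrib)
  also have "\<dots> = leval1 f + leval1 g"
    using leval1_eq_sum_superset[OF S, of f] leval1_eq_sum_superset[OF S, of g] by auto
  finally show ?thesis .
qed

lemma is_lpoly_sum: "finite S \<Longrightarrow> (\<And>x. x \<in> S \<Longrightarrow> is_lpoly (F x)) \<Longrightarrow> is_lpoly (\<Sum>x\<in>S. F x)"
  by (induction S rule: finite_induct) (auto simp: is_lpoly_0 is_lpoly_add)

lemma leval1_sum:
  "finite S \<Longrightarrow> (\<And>x. x \<in> S \<Longrightarrow> is_lpoly (F x)) \<Longrightarrow> leval1 (\<Sum>x\<in>S. F x) = (\<Sum>x\<in>S. leval1 (F x))"
  by (induction S rule: finite_induct) (auto simp: leval1_0 leval1_add is_lpoly_sum)

lemma is_lpoly_uminus: "is_lpoly f \<Longrightarrow> is_lpoly (- f)"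
  by (simp add: is_lpoly_def lsupp_def)

lemma leval1_uminus: "leval1 (- f) = - leval1 f"
  by (simp add: leval1_def lsupp_def sum_negf)

lemma is_lpoly_lmonom: "is_lpoly (lmonom c k)"
  unfolding is_lpoly_def using lsupp_lmonom finite_subset by blast

lemma leval1_lmonom: "leval1 (lmonom c k) = c"
  by (subst leval1_eq_sum_superset[of "{k}"]) (auto simp: lsupp_lmonom fls_nth_lmonom)

lemma lpoly_mult_eq_sum_lmonom:
  assumes "is_lpoly f" "is_lpoly g"
  shows "f * g = (\<Sum>n\<in>lsupp f. \<Sum>m\<in>lsupp g. lmonom (fls_nth f n * fls_nth g m) (n + m))"
proof -
  have "f * g = (\<Sum>n\<in>lsupp f. lmonom (fls_nth f n) n) * (\<Sum>m\<in>lsupp g. lmonom (fls_nth g m) m)"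
    using lpoly_eq_sum_lmonom assms by metis
  then show ?thesis
    by (simp add: sum_product lmonom_mult)
qed

lemma is_lpoly_mult: "is_lpoly f \<Longrightarrow> is_lpoly g \<Longrightarrow> is_lpoly (f * g)"
  by (simp add: lpoly_mult_eq_sum_lmonom is_lpoly_sum is_lpoly_lmonom is_lpoly_def[of f]
      is_lpoly_def[of g])

lemma leval1_mult: "is_lpoly f \<Longrightarrow> is_lpoly g \<Longrightarrow> leval1 (f * g) = leval1 f * leval1 g"
  by (simp add: lpoly_mult_eq_sum_lmonom leval1_sum is_lpoly_sum is_lpoly_lmonom leval1_lmonom
      is_lpoly_def[of f] is_lpoly_def[of g]) (simp add: leval1_def sum_product)

lemma is_lpoly_lbar: "is_lpoly f \<Longrightarrow> is_lpoly (lbar f)"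
  unfolding lbar_eq_sum_lmonom by (rule is_lpoly_sum) (auto simp: is_lpoly_def[of f] is_lpoly_lmonom)

lemma leval1_lbar: "is_lpoly f \<Longrightarrow> leval1 (lbar f) = leval1 f"
  unfolding lbar_eq_sum_lmonom
  by (subst leval1_sum) (auto simp: is_lpoly_def[of f] is_lpoly_lmonom leval1_lmonom leval1_def[of f])

lemma lsupp_1: "lsupp 1 = {0}"
  and lsupp_fls_X: "lsupp fls_X = {1}"
  and lsupp_fls_X_inv: "lsupp fls_X_inv = {-1}"
  by (auto simp: lsupp_def)

lemma is_lpoly_1: "is_lpoly 1"
  and is_lpoly_fls_X: "is_lpoly fls_X"
  and is_lpoly_fls_X_inv: "is_lpoly fls_X_inv"
  by (simp_all add: is_lpoly_def lsupp_1 lsupp_fls_X lsupp_fls_X_inv)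

lemma leval1_1: "leval1 1 = 1"
  and leval1_fls_X: "leval1 fls_X = 1"
  and leval1_fls_X_inv: "leval1 fls_X_inv = 1"
  by (simp_all add: leval1_def lsupp_1 lsupp_fls_X lsupp_fls_X_inv)

lemma lpoly_mat_mult: "lpoly_mat A \<Longrightarrow> lpoly_mat B \<Longrightarrow> lpoly_mat (A ** B)"
  by (simp add: lpoly_mat_def matrix_matrix_mult_def is_lpoly_sum is_lpoly_mult)

lemma meval1_mult: "lpoly_mat A \<Longrightarrow> lpoly_mat B \<Longrightarrow> meval1 (A ** B) = meval1 A ** meval1 B"
  by (simp add: lpoly_mat_def meval1_def matrix_matrix_mult_def vec_eq_iff is_lpoly_mult
      leval1_sum leval1_mult)

lemma lpoly_mat_mbar: "lpoly_mat A \<Longrightarrow> lpoly_mat (mbar A)"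
  by (simp add: lpoly_mat_def mbar_def is_lpoly_lbar)

lemma meval1_mbar: "lpoly_mat A \<Longrightarrow> meval1 (mbar A) = meval1 A"
  by (simp add: lpoly_mat_def meval1_def mbar_def vec_eq_iff leval1_lbar)

lemma lpoly_mat_transpose: "lpoly_mat A \<Longrightarrow> lpoly_mat (transpose A)"
  by (simp add: lpoly_mat_def transpose_def)

lemma meval1_transpose: "meval1 (transpose A) = transpose (meval1 A)"
  by (simp add: meval1_def transpose_def vec_eq_iff)

lemma lpoly_mat_J3: "lpoly_mat J3"
  by (simp add: lpoly_mat_def J3_def is_lpoly_1 is_lpoly_uminus is_lpoly_fls_X is_lpoly_fls_X_inv)

lemma meval1_J3: "meval1 J3 = mat 2 - (\<chi> i j. 1)"
  by (simp add: meval1_def J3_def mat_def vec_eq_iff leval1_1 leval1_uminus leval1_fls_X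
      leval1_fls_X_inv)

lemma meval1_mbar_J3_transpose:
  assumes "lpoly_mat A"
  shows "meval1 (mbar A ** J3 ** transpose A)
           = meval1 A ** (mat 2 - (\<chi> i j. 1)) ** transpose (meval1 A)"
  using assms
  by (simp add: meval1_mult lpoly_mat_mult lpoly_mat_mbar lpoly_mat_J3 lpoly_mat_transpose
      meval1_mbar meval1_J3 meval1_transpose)

lemma row_sums_meval1_eq_1:
  assumes "lpoly_mat A" and "A *v ones3 = ones3"
  shows "(\<Sum>j\<in>UNIV. meval1 A $ i $ j) = 1"
proof -
  have "(\<Sum>j\<in>UNIV. A $ i $ j) = 1"
    using assms(2) by (simp add: vec_eq_iff matrix_vector_mult_def ones3_def)
  then have "leval1 (\<Sum>j\<in>UNIV. A $ i $ j) = 1"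
    by (simp add: leval1_1)
  then show ?thesis
    using assms(1) by (simp add: meval1_def lpoly_mat_def leval1_sum)
qed

lemma int_indicator_if_sum_and_sum_squares_eq_1:
  fixes f :: "'a \<Rightarrow> int"
  assumes "finite S" and sum: "(\<Sum>i\<in>S. f i) = 1" and sum_squares: "(\<Sum>i\<in>S. f i ^ 2) = 1"
  shows "\<exists>k\<in>S. \<forall>i\<in>S. f i = (if i = k then 1 else 0)"
proof -
  have "0 \<le> f i * (f i - 1)" for i
    unfolding zero_le_mult_iff by linarith
  then have nonneg: "0 \<le> f i ^ 2 - f i" for i
    by (simp add: power2_eq_square right_diff_distrib)
  have "(\<Sum>i\<in>S. f i ^ 2 - f i) = 0"
    using sum sum_squares by (simp add: sum_subtractf)
  then have "f i ^ 2 - f i = 0" if "i \<in> S" for i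
    using sum_nonneg_eq_0_iff[OF \<open>finite S\<close>, of "\<lambda>i. f i ^ 2 - f i"] nonneg that by simp
  then have zero_one: "f i = 0 \<or> f i = 1" if "i \<in> S" for i
    using that by (simp add: power2_eq_square algebra_simps)
  define K where "K = {i\<in>S. f i = 1}"
  have "(\<Sum>i\<in>S. f i) = (\<Sum>i\<in>K. f i)"
    by (rule sum.mono_neutral_right) (use \<open>finite S\<close> zero_one in \<open>auto simp: K_def\<close>)
  also have "\<dots> = int (card K)"
    by (simp add: K_def)
  finally obtain k where K: "K = {k}"
    using sum by (auto simp: card_1_singleton_iff)
  then have "k \<in> S"
    by (auto simp: K_def)
  moreover have "f i = (if i = k then 1 else 0)" if "i \<in> S" for i
    using K zero_one[OF that] that by (auto simp: K_def set_eq_iff)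
  ultimately show ?thesis
    by blast
qed

lemma mult_transpose_eq_1_if_row_sums_eq_1:
  fixes P :: "int^'n^'n"
  defines "E \<equiv> \<chi> i j. 1"
  assumes row_sums: "\<And>i. (\<Sum>j\<in>UNIV. P$i$j) = 1"
    and J: "P ** (mat 2 - E) ** transpose P = mat 2 - E"
  shows "P ** transpose P = mat 1"
proof -
  have "(\<Sum>j\<in>UNIV. P$i$j * mat 2$j$k) = 2 * P$i$k" for i k
    by (simp add: mat_def if_distrib cong: if_cong)
  then have left: "(P ** (mat 2 - E))$i$k = 2 * P$i$k - 1" for i k
    by (simp add: E_def matrix_matrix_mult_def right_diff_distrib sum_subtractf row_sums)
  have mult_transpose: "(Q ** transpose P)$i$j = (\<Sum>k\<in>UNIV. Q$i$k * P$j$k)" for Q :: "int^'n^'n" and i j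
    by (simp add: matrix_matrix_mult_def transpose_def)
  have "(P ** (mat 2 - E) ** transpose P)$i$j = 2 * (P ** transpose P)$i$j - 1" for i j
    unfolding mult_transpose left
    by (simp add: left_diff_distrib sum_subtractf row_sums sum_distrib_left mult.assoc)
  then have "2 * (P ** transpose P)$i$j = 2 * mat 1$i$j" for i j
    using J[THEN arg_cong[where f = "\<lambda>M. M$i$j"]] by (simp add: E_def mat_def)
  then show ?thesis
    by (simp add: vec_eq_iff)
qed

lemma perm_matrix_if_orthogonal_and_row_sums_eq_1:
  fixes P :: "int^'n^'n"
  assumes row_sums: "\<And>i. (\<Sum>j\<in>UNIV. P$i$j) = 1"
    and orth: "P ** transpose P = mat 1"
  shows "\<exists>\<sigma>. \<sigma> permutes UNIV \<and> P = (\<chi> i j. if \<sigma> i = j then 1 else 0)"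
proof -
  have "(\<Sum>j\<in>UNIV. P$i$j ^ 2) = 1" for i
    using orth by (simp add: vec_eq_iff matrix_matrix_mult_def transpose_def mat_def power2_eq_square)
  then have "\<exists>k. \<forall>j. P$i$j = (if j = k then 1 else 0)" for i
    using int_indicator_if_sum_and_sum_squares_eq_1[of UNIV "\<lambda>j. P$i$j"] row_sums by auto
  then obtain \<sigma> where \<sigma>: "\<And>i j. P$i$j = (if \<sigma> i = j then 1 else 0)"
    by metis
  have "inj \<sigma>"
  proof (rule injI)
    fix i i' assume "\<sigma> i = \<sigma> i'"
    then have "P$i = P$i'"
      by (simp add: vec_eq_iff \<sigma>)
    then have "(P ** transpose P)$i$i' = (P ** transpose P)$i$i"
      by (simp add: matrix_matrix_mult_def transpose_def)
    then show "i = i'"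
      using orth by (simp add: mat_def split: if_splits)
  qed
  then have "\<sigma> permutes UNIV"
    by (rule inj_imp_permutes) auto
  moreover have "P = (\<chi> i j. if \<sigma> i = j then 1 else 0)"
    by (simp add: vec_eq_iff \<sigma>)
  ultimately show ?thesis
    by blast
qed

theorem lemma3p15:
  shows "formal_Burau = Salter_Gamma"
proof
  show "Salter_Gamma \<subseteq> formal_Burau"
    by (auto simp: Salter_Gamma_def)
  show "formal_Burau \<subseteq> Salter_Gamma"
  proof
    fix A assume A: "A \<in> formal_Burau"
    then have lpoly: "lpoly_mat A" and rows: "A *v ones3 = ones3"
      and unitary: "mbar A ** J3 ** transpose A = J3"
      by (auto simp: formal_Burau_def GL3_lpoly_def)
    let ?P = "meval1 A"
    have row_sums: "(\<Sum>j\<in>UNIV. ?P $ i $ j) = 1" for i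
      using row_sums_meval1_eq_1[OF lpoly rows] .
    have "?P ** (mat 2 - (\<chi> i j. 1)) ** transpose ?P = mat 2 - (\<chi> i j. 1)"
      using meval1_mbar_J3_transpose[OF lpoly] unitary by (simp add: meval1_J3)
    then have "?P ** transpose ?P = mat 1"
      using mult_transpose_eq_1_if_row_sums_eq_1 row_sums by blast
    then have "is_perm_matrix ?P"
      unfolding is_perm_matrix_def using perm_matrix_if_orthogonal_and_row_sums_eq_1 row_sums by blast
    then show "A \<in> Salter_Gamma"
      using A by (simp add: Salter_Gamma_def)
  qed
qed

end
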